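(* If $G=(V,E)$ is a word-representable graph with representation number $k>3$, then $G$ is not $3$-complete square-free uniform word-representable.
   Context: A graph $G=(V,E)$ is word-representable if there is a word $w$ over $V$, containing every letter of $V$, such that distinct $x,y\in V$ alternate in $w$ (deleting all other letters yields $xyxy\cdots$ or $yxyx\cdots$) iff $xy\in E$; $w$ represents $G$. A word is $k$-uniform if every letter occurs exactly $k$ times, and uniform if it is $k$-uniform for some $k$. The representation number of a word-representable graph is the least $k$ such that it is represented by a $k$-uniform word. For a word $w$ over $\Sigma$ and $S\subseteq\Sigma$, $w_S$ denotes the word obtained from $w$ by deleting all letters not in $S$. For an integer $p\ge1$, $w$ contains a $p$-complete square if there exists $S\subseteq\Sigma$ such that $w_S$ contains a factor $XX$ with $X\in S^+$ and $|X|\ge p$; otherwise $w$ is $p$-complete square-free. A graph $G$ is $p$-complete square-free uniform word-representable if it is represented by a uniform word $w$ that is $p$-complete square-free. *)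

theory Defs
  imports Main
begin

definition simple_graph :: "'a set \<Rightarrow> 'a set set \<Rightarrow> bool" where
  "simple_graph V E \<longleftrightarrow> finite V \<and>
     (\<forall>e\<in>E. \<exists>x y. e = {x, y} \<and> x \<noteq> y \<and> x \<in> V \<and> y \<in> V)"

definition restrict_word :: "'a list \<Rightarrow> 'a set \<Rightarrow> 'a list" where
  "restrict_word w S = filter (\<lambda>c. c \<in> S) w"

definition alternate :: "'a list \<Rightarrow> 'a \<Rightarrow> 'a \<Rightarrow> bool" where
  "alternate w x y \<longleftrightarrow>
     (let u = restrict_word w {x, y} in \<forall>i. Suc i < length u \<longrightarrow> u ! i \<noteq> u ! Suc i)"

definition represents :: "'a list \<Rightarrow> 'a set \<Rightarrow> 'a set set \<Rightarrow> bool" where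
  "represents w V E \<longleftrightarrow> set w = V \<and>
     (\<forall>x\<in>V. \<forall>y\<in>V. x \<noteq> y \<longrightarrow> (alternate w x y \<longleftrightarrow> {x, y} \<in> E))"

definition word_representable :: "'a set \<Rightarrow> 'a set set \<Rightarrow> bool" where
  "word_representable V E \<longleftrightarrow> (\<exists>w. represents w V E)"

definition k_uniform :: "nat \<Rightarrow> 'a list \<Rightarrow> bool" where
  "k_uniform k w \<longleftrightarrow> (\<forall>a\<in>set w. count_list w a = k)"

definition uniform :: "'a list \<Rightarrow> bool" where
  "uniform w \<longleftrightarrow> (\<exists>k. k_uniform k w)"

definition representation_number :: "'a set \<Rightarrow> 'a set set \<Rightarrow> nat" where
  "representation_number V E = (LEAST k. \<exists>w. k_uniform k w \<and> represents w V E)"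

definition contains_complete_square :: "nat \<Rightarrow> 'a list \<Rightarrow> bool" where
  "contains_complete_square p w \<longleftrightarrow>
     (\<exists>S u X v. restrict_word w S = u @ X @ X @ v \<and> X \<noteq> [] \<and> set X \<subseteq> S \<and> p \<le> length X)"

definition complete_square_free :: "nat \<Rightarrow> 'a list \<Rightarrow> bool" where
  "complete_square_free p w \<longleftrightarrow> \<not> contains_complete_square p w"

definition csf_uniform_word_representable :: "nat \<Rightarrow> 'a set \<Rightarrow> 'a set set \<Rightarrow> bool" where
  "csf_uniform_word_representable p V E \<longleftrightarrow>
     (\<exists>w. uniform w \<and> represents w V E \<and> complete_square_free p w)"

end

theory Submission
  imports Defs
begin

text \<open>Let \<open>w\<close> be an \<open>m\<close>-uniform word representing the graph; \<open>m \<ge> 4\<close> by the representation number.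
  Every edge \<open>xy\<close> then yields a restriction \<open>xyxy\<dots>\<close> of length \<open>2m \<ge> 8\<close>, which begins with
  the complete square \<open>(xyxy)(xyxy)\<close>. So the graph is edgeless, but edgeless graphs are
  represented by the 2-uniform word \<open>\<pi> \<pi>\<^sup>R\<close> for any permutation \<open>\<pi>\<close> of the vertices.\<close>

lemma representation_number_le:
  assumes "k_uniform k w" and "represents w V E"
  shows "representation_number V E \<le> k"
  unfolding representation_number_def by (rule Least_le) (use assms in blast)

lemma contains_complete_square_mono:
  assumes "contains_complete_square q w" and "p \<le> q"
  shows "contains_complete_square p w"
  using assms unfolding contains_complete_square_def by (meson order_trans)

lemma length_restrict_word_pair:
  "x \<noteq> y \<Longrightarrow> length (restrict_word w {x, y}) = count_list w x + count_list w y"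
  by (induction w) (auto simp: restrict_word_def)

lemma alternate_iff_successively:
  "alternate w x y \<longleftrightarrow> successively (\<noteq>) (restrict_word w {x, y})"
  by (simp add: alternate_def Let_def successively_conv_nth)

lemma alternating_nth_add_2:
  assumes "successively (\<noteq>) u"
    and "set u \<subseteq> {x, y}" and "i + 2 < length u"
  shows "u ! (i + 2) = u ! i"
proof -
  have "i < length u" "Suc i < length u" "Suc (Suc i) < length u" using assms(3) by auto
  then have "u ! i \<in> {x, y}" "u ! Suc i \<in> {x, y}" "u ! Suc (Suc i) \<in> {x, y}"
    using assms(2) nth_mem by blast+
  moreover have "u ! i \<noteq> u ! Suc i" "u ! Suc i \<noteq> u ! Suc (Suc i)"
    using successively_nth[OF assms(1)] assms(3) by auto
  ultimately show ?thesis by (auto simp: numeral_2_eq_2)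
qed

lemma alternating_nth_add_even:
  assumes "successively (\<noteq>) u"
    and "set u \<subseteq> {x, y}" and "i + 2 * j < length u"
  shows "u ! (i + 2 * j) = u ! i"
  using assms(3)
proof (induction j)
  case (Suc j)
  have "u ! (i + 2 * Suc j) = u ! ((i + 2 * j) + 2)" by (simp add: algebra_simps)
  also have "\<dots> = u ! (i + 2 * j)"
    using alternating_nth_add_2[OF assms(1,2)] Suc.prems by simp
  also have "\<dots> = u ! i" using Suc by simp
  finally show ?case .
qed simp

lemma alternating_square:
  assumes "successively (\<noteq>) u"
    and "set u \<subseteq> {x, y}" and "even p" and "2 * p \<le> length u"
  shows "u = take p u @ take p u @ drop (2 * p) u"
proof -
  obtain j where j: "p = 2 * j" using \<open>even p\<close> by blast
  have "take p (drop p u) = take p u"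
  proof (rule nth_equalityI)
    fix i assume "i < length (take p (drop p u))"
    then have "i + 2 * j < length u" "i < p" using j by auto
    then show "take p (drop p u) ! i = take p u ! i"
      using alternating_nth_add_even[OF assms(1,2)] j by (simp add: add.commute)
  qed (use assms(4) in simp)
  moreover have "u = take p u @ take p (drop p u) @ drop (2 * p) u"
    by (metis append_take_drop_id drop_drop mult_2)
  ultimately show ?thesis by simp
qed

lemma alternate_contains_complete_square:
  assumes "alternate w x y" and "x \<noteq> y" and "even p" and "0 < p"
    and "2 * p \<le> count_list w x + count_list w y"
  shows "contains_complete_square p w"
proof -
  let ?u = "restrict_word w {x, y}"
  have set_u: "set ?u \<subseteq> {x, y}" by (auto simp: restrict_word_def)
  have "?u = [] @ take p ?u @ take p ?u @ drop (2 * p) ?u"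
    using alternating_square[OF _ set_u \<open>even p\<close>] assms(1,5)
      length_restrict_word_pair[OF \<open>x \<noteq> y\<close>]
    by (simp add: alternate_iff_successively)
  moreover have "set (take p ?u) \<subseteq> {x, y}" using set_u set_take_subset by fastforce
  moreover have "length (take p ?u) = p"
    using assms(5) length_restrict_word_pair[OF \<open>x \<noteq> y\<close>] by simp
  ultimately show ?thesis
    unfolding contains_complete_square_def using \<open>0 < p\<close> by (metis length_0_conv not_less0 order_refl)
qed

lemma count_list_distinct: "distinct xs \<Longrightarrow> a \<in> set xs \<Longrightarrow> count_list xs a = 1"
  by (induction xs) auto

lemma representation_number_edgeless_le_2:
  assumes "finite V"
  shows "representation_number V {} \<le> 2"
proof -
  obtain xs where xs: "set xs = V" "distinct xs"
    using assms finite_distinct_list by blast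
  define w where "w = xs @ rev xs"
  have "k_uniform 2 w"
    unfolding k_uniform_def w_def using xs count_list_distinct[OF xs(2)]
    by (auto simp: count_list_rev)
  moreover have "\<not> alternate w x y" if "x \<in> V" "y \<in> V" "x \<noteq> y" for x y
  proof -
    let ?f = "filter (\<lambda>c. c \<in> {x, y}) xs"
    have "distinct ?f" "set ?f = {x, y}" using xs that by auto
    then have "length ?f = 2" using distinct_card[of ?f] that by simp
    then obtain a b where ab: "?f = [a, b]"
      by (metis length_0_conv length_Suc_conv numeral_2_eq_2)
    have "restrict_word w {x, y} = [a, b, b, a]"
      unfolding restrict_word_def w_def using ab by (simp flip: rev_filter)
    then show ?thesis by (simp add: alternate_iff_successively)
  qed
  moreover have "set w = V" using xs by (simp add: w_def)
  ultimately show ?thesis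
    using representation_number_le[of 2 w V "{}"] by (simp add: represents_def)
qed

theorem mainTheorem14:
  fixes V :: "'a set" and E :: "'a set set" and k :: nat
  assumes "simple_graph V E"
    and "word_representable V E"
    and "representation_number V E = k"
    and "k > 3"
  shows "\<not> csf_uniform_word_representable 3 V E"
proof
  assume "csf_uniform_word_representable 3 V E"
  then obtain w m where w: "k_uniform m w" "represents w V E" "complete_square_free 3 w"
    unfolding csf_uniform_word_representable_def uniform_def by blast
  have "4 \<le> m" using representation_number_le[OF w(1,2)] assms(3,4) by simp
  have "E = {}"
  proof (rule ccontr)
    assume "E \<noteq> {}"
    then obtain e where "e \<in> E" by blast
    then obtain x y where xy: "e = {x, y}" "x \<noteq> y" "x \<in> V" "y \<in> V"
      using assms(1) unfolding simple_graph_def by blast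
    have "alternate w x y" "x \<in> set w" "y \<in> set w"
      using w(2) xy \<open>e \<in> E\<close> unfolding represents_def by blast+
    then have "count_list w x = m" "count_list w y = m"
      using w(1) unfolding k_uniform_def by blast+
    then have "contains_complete_square 4 w"
      using alternate_contains_complete_square[of w x y 4] \<open>alternate w x y\<close> xy(2) \<open>4 \<le> m\<close>
      by simp
    then show False
      using w(3) contains_complete_square_mono[of 4 w 3] by (simp add: complete_square_free_def)
  qed
  moreover have "finite V" using assms(1) by (simp add: simple_graph_def)
  ultimately have "representation_number V E \<le> 2"
    using representation_number_edgeless_le_2 by blast
  with assms(3,4) show False by simp
qed

end
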